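(* Let $F$ be a perfect field of characteristic $\neq 2$ and let $(V,q)$ be a nondegenerate quadratic space over $F$ with $\dim V=n=2m+1$, $m$ odd, of maximal Witt index, with basis $\{e_0,e_1,f_1,\ldots,e_m,f_m\}$ where $q(e_0)\neq0$, $e_0\perp e_i,f_i$, $B(e_i,f_j)=\delta_{ij}$, $B(e_i,e_j)=0=B(f_i,f_j)$. Let $t$ be an element of $T=\{\lambda_0\prod_{i=1}^m(e_i+f_i)(e_i+\lambda_if_i):\lambda_i\in F^*\}\subseteq\Gamma^+(V,q)$. Then there exists $s\in\Gamma^+(V,q)$ such that $sts^{-1}=N(t)t^{-1}$, $N(s)=1$ and $s^2=(-1)^{m(m+1)/2}$.
   Context: $B(x,y)=q(x+y)-q(x)-q(y)$. $C(V,q)=T(V)/\langle x\otimes x-q(x)\cdot1\rangle=C_0\oplus C_1$, $\Gamma(V,q)=\{u\in C(V,q)^\times: uVu^{-1}\subseteq V\}$, $\Gamma^+(V,q)=\Gamma(V,q)\cap C_0(V,q)$. With $\tau$ the anti-involution reversing products of vectors, $N(u)=\tau(u)u$. *)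

theory Defs
  imports Main
begin

definition perfect_field :: "'a::field itself \<Rightarrow> bool" where
  "perfect_field _ \<longleftrightarrow> CHAR('a) = 0 \<or> (\<forall>x::'a. \<exists>y. y ^ CHAR('a) = x)"

(* V = F^n, coordinates w.r.t. the basis.  Index 0 is e_0, index 2i-1 is e_i,
   index 2i is f_i (1 \<le> i \<le> m), n = 2m+1. *)
definition vecsp :: "nat \<Rightarrow> (nat \<Rightarrow> 'a::zero) set" where
  "vecsp n = {x. \<forall>i\<ge>n. x i = 0}"

(* the quadratic form with q(e_0) = a, e_0 orthogonal to e_i,f_i, B(e_i,f_j)=\<delta>_ij,
   B(e_i,e_j) = 0 = B(f_i,f_j) (hence q(e_i) = q(f_i) = 0 as char \<noteq> 2). *)
definition qform :: "'a::field \<Rightarrow> nat \<Rightarrow> (nat \<Rightarrow> 'a) \<Rightarrow> 'a" where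
  "qform a m x = a * (x 0)^2 + (\<Sum>i=1..m. x (2*i - 1) * x (2*i))"

definition basis_vec :: "nat \<Rightarrow> nat \<Rightarrow> 'a::{zero,one}" where
  "basis_vec k = (\<lambda>j. if j = k then 1 else 0)"

abbreviation e_vec :: "nat \<Rightarrow> nat \<Rightarrow> 'a::{zero,one}" where "e_vec i \<equiv> basis_vec (2*i - 1)"
abbreviation f_vec :: "nat \<Rightarrow> nat \<Rightarrow> 'a::{zero,one}" where "f_vec i \<equiv> basis_vec (2*i)"

(* Tensor algebra T(V): elements are finitely supported coefficient functions on
   words (lists) of basis indices < n. *)
type_synonym 'a tens = "nat list \<Rightarrow> 'a"

definition tens_ok :: "nat \<Rightarrow> 'a::zero tens \<Rightarrow> bool" where
  "tens_ok n u \<longleftrightarrow> finite {w. u w \<noteq> 0} \<and> (\<forall>w. u w \<noteq> 0 \<longrightarrow> set w \<subseteq> {..<n})"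

definition tmul :: "'a::comm_ring_1 tens \<Rightarrow> 'a tens \<Rightarrow> 'a tens" where
  "tmul u v = (\<lambda>w. \<Sum>k\<le>length w. u (take k w) * v (drop k w))"

definition tadd :: "'a::comm_ring_1 tens \<Rightarrow> 'a tens \<Rightarrow> 'a tens" where
  "tadd u v = (\<lambda>w. u w + v w)"

definition tsub :: "'a::comm_ring_1 tens \<Rightarrow> 'a tens \<Rightarrow> 'a tens" where
  "tsub u v = (\<lambda>w. u w - v w)"

definition tsmul :: "'a::comm_ring_1 \<Rightarrow> 'a tens \<Rightarrow> 'a tens" where
  "tsmul c u = (\<lambda>w. c * u w)"

definition tone :: "'a::comm_ring_1 tens" where
  "tone = (\<lambda>w. if w = [] then 1 else 0)"

definition tvec :: "(nat \<Rightarrow> 'a::comm_ring_1) \<Rightarrow> 'a tens" where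
  "tvec x = (\<lambda>w. case w of [i] \<Rightarrow> x i | _ \<Rightarrow> 0)"

definition tprod_list :: "'a::comm_ring_1 tens list \<Rightarrow> 'a tens" where
  "tprod_list us = foldr tmul us tone"

definition trev :: "'a tens \<Rightarrow> 'a tens" where
  "trev u = (\<lambda>w. u (rev w))"

inductive_set clideal :: "nat \<Rightarrow> ((nat \<Rightarrow> 'a::comm_ring_1) \<Rightarrow> 'a) \<Rightarrow> 'a tens set"
  for n q where
  zero: "(\<lambda>_. 0) \<in> clideal n q"
| gen: "x \<in> vecsp n \<Longrightarrow> tens_ok n u \<Longrightarrow> tens_ok n v \<Longrightarrow>
        tmul u (tmul (tsub (tmul (tvec x) (tvec x)) (tsmul (q x) tone)) v) \<in> clideal n q"
| add: "u \<in> clideal n q \<Longrightarrow> v \<in> clideal n q \<Longrightarrow> tadd u v \<in> clideal n q"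

(* equality in C(V,q) = T(V)/I of the classes of two tensors *)
definition cl_eq :: "nat \<Rightarrow> ((nat \<Rightarrow> 'a::comm_ring_1) \<Rightarrow> 'a) \<Rightarrow> 'a tens \<Rightarrow> 'a tens \<Rightarrow> bool" where
  "cl_eq n q u v \<longleftrightarrow> tsub u v \<in> clideal n q"

definition cl_inv :: "nat \<Rightarrow> ((nat \<Rightarrow> 'a::comm_ring_1) \<Rightarrow> 'a) \<Rightarrow> 'a tens \<Rightarrow> 'a tens \<Rightarrow> bool" where
  "cl_inv n q u ui \<longleftrightarrow> tens_ok n ui \<and> cl_eq n q (tmul u ui) tone \<and> cl_eq n q (tmul ui u) tone"

definition cl_even :: "nat \<Rightarrow> ((nat \<Rightarrow> 'a::comm_ring_1) \<Rightarrow> 'a) \<Rightarrow> 'a tens \<Rightarrow> bool" where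
  "cl_even n q u \<longleftrightarrow> (\<exists>u'. tens_ok n u' \<and> (\<forall>w. u' w \<noteq> 0 \<longrightarrow> even (length w)) \<and> cl_eq n q u u')"

definition in_Gamma :: "nat \<Rightarrow> ((nat \<Rightarrow> 'a::comm_ring_1) \<Rightarrow> 'a) \<Rightarrow> 'a tens \<Rightarrow> bool" where
  "in_Gamma n q u \<longleftrightarrow> tens_ok n u \<and> (\<exists>ui. cl_inv n q u ui \<and>
     (\<forall>x\<in>vecsp n. \<exists>y\<in>vecsp n. cl_eq n q (tmul (tmul u (tvec x)) ui) (tvec y)))"

definition in_Gamma_plus :: "nat \<Rightarrow> ((nat \<Rightarrow> 'a::comm_ring_1) \<Rightarrow> 'a) \<Rightarrow> 'a tens \<Rightarrow> bool" where
  "in_Gamma_plus n q u \<longleftrightarrow> in_Gamma n q u \<and> cl_even n q u"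

definition Nrm :: "'a::comm_ring_1 tens \<Rightarrow> 'a tens" where
  "Nrm u = tmul (trev u) u"

definition T_elem :: "nat \<Rightarrow> (nat \<Rightarrow> 'a::field) \<Rightarrow> 'a tens" where
  "T_elem m lam = tsmul (lam 0) (tprod_list (map (\<lambda>i.
      tmul (tadd (tvec (e_vec i)) (tvec (f_vec i)))
           (tadd (tvec (e_vec i)) (tsmul (lam i) (tvec (f_vec i))))) [1..<m+1]))"

end

theory Submission
  imports Defs
begin

(*
  Take s = e_0 y_1 ... y_m with y_1 = e_1 + a\<^sup>-\<^sup>1 f_1 and y_i = e_i + f_i for i \<ge> 2: a product of
  m + 1 pairwise orthogonal vectors whose q-values multiply to q(e_0) q(y_1) = 1.  Hence s is even
  (m is odd), lies in \<Gamma>, N(s) = 1 and s\<^sup>2 = (-1)^(m(m+1)/2).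

  Write t = \<lambda>_0 u_1 v_1 ... u_m v_m with u_i = e_i + f_i and v_i = e_i + \<lambda>_i f_i.  Conjugating
  u_i v_i by a vector orthogonal to the plane \<langle>e_i, f_i\<rangle> only multiplies it by the q-value of that
  vector, while conjugation by y_i reverses it to v_i u_i; all scalars cancel, so s u_i v_i s\<^sup>-\<^sup>1 = v_i u_i.
  Since v_i u_i commutes with the vectors of the other planes, s t s\<^sup>-\<^sup>1 = \<lambda>_0 v_m u_m ... v_1 u_1 = \<tau>(t),
  and \<tau>(t) = N(t) t\<^sup>-\<^sup>1 for every invertible t.
*)

section \<open>The tensor algebra\<close>

lemma tmul_assoc: "tmul u (tmul v z) = tmul (tmul u v) (z::'a::comm_ring_1 tens)"
proof
  fix w :: "nat list"
  define L where "L = length w"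
  define G where "G = (\<lambda>a b. u (take a w) * v (take (b-a) (drop a w)) * z (drop b w))"
  have "tmul u (tmul v z) w = (\<Sum>k\<le>L. \<Sum>j\<le>L-k. G k (k+j))"
    unfolding tmul_def G_def L_def
    by (simp add: sum_distrib_left mult.assoc add.commute)
  also have "\<dots> = sum (\<lambda>(k,j). G k (k+j)) (SIGMA k:{..L}. {..L-k})"
    by (simp add: sum.Sigma)
  also have "\<dots> = sum (\<lambda>(b,a). G a b) (SIGMA b:{..L}. {..b})"
    by (rule sum.reindex_bij_witness[where i="\<lambda>(b,a). (a, b-a)" and j="\<lambda>(k,j). (k+j, k)"]) auto
  also have "\<dots> = (\<Sum>b\<le>L. \<Sum>a\<le>b. G a b)"
    by (simp add: sum.Sigma)
  also have "\<dots> = tmul (tmul u v) z w"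
    unfolding tmul_def G_def L_def
    by (auto simp: sum_distrib_right min_def take_drop split: if_splits intro!: sum.cong)
  finally show "tmul u (tmul v z) w = tmul (tmul u v) z w" .
qed

lemma tmul_tone_left [simp]: "tmul tone u = (u::'a::comm_ring_1 tens)"
proof
  fix w
  have "tmul tone u w = (\<Sum>k\<le>length w. if k = 0 then u (drop k w) else 0)"
    unfolding tmul_def by (rule sum.cong) (auto simp: tone_def)
  then show "tmul tone u w = u w" by simp
qed

lemma tmul_tone_right [simp]: "tmul u tone = (u::'a::comm_ring_1 tens)"
proof
  fix w
  have "tmul u tone w = (\<Sum>k\<le>length w. if k = length w then u (take k w) else 0)"
    unfolding tmul_def by (rule sum.cong) (auto simp: tone_def)
  then show "tmul u tone w = u w" by simp
qed

lemma tmul_tadd_left: "tmul (tadd u v) z = tadd (tmul u z) (tmul v (z::'a::comm_ring_1 tens))"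
  by (rule ext) (simp add: tmul_def tadd_def sum.distrib algebra_simps)

lemma tmul_tadd_right: "tmul z (tadd u v) = tadd (tmul z u) (tmul z (v::'a::comm_ring_1 tens))"
  by (rule ext) (simp add: tmul_def tadd_def sum.distrib algebra_simps)

lemma tmul_tsub_left: "tmul (tsub u v) z = tsub (tmul u z) (tmul v (z::'a::comm_ring_1 tens))"
  by (rule ext) (simp add: tmul_def tsub_def sum_subtractf algebra_simps)

lemma tmul_tsub_right: "tmul z (tsub u v) = tsub (tmul z u) (tmul z (v::'a::comm_ring_1 tens))"
  by (rule ext) (simp add: tmul_def tsub_def sum_subtractf algebra_simps)

lemma tmul_tsmul_left [simp]: "tmul (tsmul c u) z = tsmul c (tmul u (z::'a::comm_ring_1 tens))"
  by (rule ext) (simp add: tmul_def tsmul_def sum_distrib_left algebra_simps)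

lemma tmul_tsmul_right [simp]: "tmul z (tsmul c u) = tsmul c (tmul z (u::'a::comm_ring_1 tens))"
  by (rule ext) (simp add: tmul_def tsmul_def sum_distrib_left algebra_simps)

lemma tsmul_tsmul [simp]: "tsmul c (tsmul d u) = tsmul (c * d) (u::'a::comm_ring_1 tens)"
  by (rule ext) (simp add: tsmul_def)

lemma tsmul_one [simp]: "tsmul 1 u = (u::'a::comm_ring_1 tens)"
  by (rule ext) (simp add: tsmul_def)

lemma tmul_nonzeroD:
  assumes "tmul u v w \<noteq> 0"
  obtains x y where "w = x @ y" "u x \<noteq> 0" "v y \<noteq> 0"
proof -
  from assms obtain k where "u (take k w) * v (drop k w) \<noteq> 0"
    unfolding tmul_def by (metis (no_types, lifting) sum.neutral)
  then show thesis by (intro that[of "take k w" "drop k w"]) auto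
qed

lemma tens_ok_tsmul [intro]:
  assumes "tens_ok n u"
  shows "tens_ok n (tsmul c u)"
proof -
  have "{w. tsmul c u w \<noteq> 0} \<subseteq> {w. u w \<noteq> 0}"
    by (auto simp: tsmul_def)
  then show ?thesis
    using assms unfolding tens_ok_def by (meson finite_subset mem_Collect_eq subsetD)
qed

lemma tens_ok_tone [intro]: "tens_ok n tone"
  unfolding tens_ok_def tone_def by auto

lemma tens_ok_tvec [intro]:
  assumes "x \<in> vecsp n"
  shows "tens_ok n (tvec x)"
proof -
  have "{w. tvec x w \<noteq> 0} \<subseteq> (\<lambda>i. [i]) ` {..<n}"
  proof
    fix w
    assume "w \<in> {w. tvec x w \<noteq> 0}"
    then obtain i where "w = [i]" "x i \<noteq> 0"
      by (auto simp: tvec_def split: list.splits)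
    moreover have "i < n"
      using \<open>x i \<noteq> 0\<close> assms not_less unfolding vecsp_def by blast
    ultimately show "w \<in> (\<lambda>i. [i]) ` {..<n}"
      by auto
  qed
  then show ?thesis
    unfolding tens_ok_def by (auto intro: finite_subset)
qed

lemma tens_ok_tmul [intro]:
  assumes u: "tens_ok n u" and v: "tens_ok n v"
  shows "tens_ok n (tmul u v)"
proof -
  have "{w. tmul u v w \<noteq> 0} \<subseteq> (\<lambda>(x,y). x @ y) ` ({w. u w \<noteq> 0} \<times> {w. v w \<noteq> 0})"
    by (force elim: tmul_nonzeroD)
  moreover have "finite ((\<lambda>(x,y). x @ y) ` ({w. u w \<noteq> 0} \<times> {w. v w \<noteq> 0}))"
    using u v unfolding tens_ok_def by auto
  moreover have "set w \<subseteq> {..<n}" if "tmul u v w \<noteq> 0" for w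
    using that u v unfolding tens_ok_def by (elim tmul_nonzeroD) auto
  ultimately show ?thesis
    unfolding tens_ok_def by (auto intro: finite_subset)
qed

lemma tens_ok_trev [intro]:
  assumes "tens_ok n u"
  shows "tens_ok n (trev u)"
proof -
  have "{w. trev u w \<noteq> 0} = rev ` {w. u w \<noteq> 0}"
    unfolding trev_def by (auto intro: image_eqI[where x="rev _"])
  then show ?thesis
    using assms unfolding tens_ok_def trev_def by (metis (mono_tags, lifting) finite_imageI set_rev)
qed

lemma trev_tmul: "trev (tmul u v) = tmul (trev v) (trev (u::'a::comm_ring_1 tens))"
proof
  fix w :: "nat list"
  have "trev (tmul u v) w = (\<Sum>k\<le>length w. u (take k (rev w)) * v (drop k (rev w)))"
    by (simp add: trev_def tmul_def)
  also have "\<dots> = (\<Sum>k\<le>length w. v (rev (take k w)) * u (rev (drop k w)))"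
    by (rule sum.reindex_bij_witness[where i="\<lambda>k. length w - k" and j="\<lambda>k. length w - k"])
       (auto simp: take_rev drop_rev mult.commute)
  also have "\<dots> = tmul (trev v) (trev u) w"
    by (simp add: trev_def tmul_def)
  finally show "trev (tmul u v) w = tmul (trev v) (trev u) w" .
qed

lemma trev_tvec [simp]: "trev (tvec x) = tvec x"
proof
  fix w
  show "trev (tvec x) w = tvec x w"
    unfolding trev_def tvec_def
    by (cases w rule: rev_cases) (auto split: list.splits simp: Cons_eq_append_conv)
qed

lemma trev_tsmul [simp]: "trev (tsmul c u) = tsmul c (trev u)"
  by (simp add: trev_def tsmul_def)

section \<open>The Clifford congruence\<close>

lemma clideal_tmul_left: "c \<in> clideal n q \<Longrightarrow> tens_ok n p \<Longrightarrow> tmul p c \<in> clideal n q"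
proof (induction rule: clideal.induct)
  case zero
  then show ?case by (simp add: tmul_def clideal.zero)
next
  case (gen x u v)
  then show ?case
    by (simp only: tmul_assoc [of p u] clideal.gen tens_ok_tmul)
next
  case (add u v)
  then show ?case by (simp add: tmul_tadd_right clideal.add)
qed

lemma clideal_tmul_right: "c \<in> clideal n q \<Longrightarrow> tens_ok n p \<Longrightarrow> tmul c p \<in> clideal n q"
proof (induction rule: clideal.induct)
  case zero
  then show ?case by (simp add: tmul_def clideal.zero)
next
  case (gen x u v)
  then show ?case
    by (simp only: tmul_assoc [symmetric] clideal.gen tens_ok_tmul)
next
  case (add u v)
  then show ?case by (simp add: tmul_tadd_left clideal.add)
qed

lemma clideal_tsmul: "c \<in> clideal n q \<Longrightarrow> tsmul r c \<in> clideal n q"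
proof (induction rule: clideal.induct)
  case zero
  then show ?case by (simp add: tsmul_def clideal.zero)
next
  case (gen x u v)
  then show ?case
    using clideal.gen[of x n "tsmul r u" v q] by auto
next
  case (add u v)
  have "tsmul r (tadd u v) = tadd (tsmul r u) (tsmul r v)"
    by (rule ext) (simp add: tsmul_def tadd_def algebra_simps)
  then show ?case using add by (simp add: clideal.add)
qed

lemma clideal_tsub: "c \<in> clideal n q \<Longrightarrow> d \<in> clideal n q \<Longrightarrow> tsub c d \<in> clideal n q"
proof -
  assume "c \<in> clideal n q" "d \<in> clideal n q"
  moreover have "tsub c d = tadd c (tsmul (-1) d)"
    by (rule ext) (simp add: tsub_def tadd_def tsmul_def)
  ultimately show ?thesis by (simp add: clideal.add clideal_tsmul)
qed

lemma cl_eq_refl [intro]: "cl_eq n q u u"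
  unfolding cl_eq_def tsub_def by (simp add: clideal.zero)

lemma cl_eq_sym: "cl_eq n q u v \<Longrightarrow> cl_eq n q v u"
proof -
  assume "cl_eq n q u v"
  moreover have "tsub v u = tsmul (-1) (tsub u v)"
    by (rule ext) (simp add: tsub_def tsmul_def)
  ultimately show ?thesis unfolding cl_eq_def by (simp add: clideal_tsmul)
qed

lemma cl_eq_trans [trans]: "cl_eq n q u v \<Longrightarrow> cl_eq n q v z \<Longrightarrow> cl_eq n q u z"
proof -
  assume "cl_eq n q u v" "cl_eq n q v z"
  moreover have "tsub u z = tadd (tsub u v) (tsub v z)"
    by (rule ext) (simp add: tsub_def tadd_def)
  ultimately show ?thesis unfolding cl_eq_def by (simp add: clideal.add)
qed

lemma cl_eq_trans_eq1 [trans]: "u = v \<Longrightarrow> cl_eq n q v z \<Longrightarrow> cl_eq n q u z"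
  by simp

lemma cl_eq_trans_eq2 [trans]: "cl_eq n q u v \<Longrightarrow> v = z \<Longrightarrow> cl_eq n q u z"
  by simp

lemma cl_eq_tmul_left: "cl_eq n q u u' \<Longrightarrow> tens_ok n v \<Longrightarrow> cl_eq n q (tmul u v) (tmul u' v)"
  unfolding cl_eq_def by (simp add: tmul_tsub_left [symmetric] clideal_tmul_right)

lemma cl_eq_tmul_right: "cl_eq n q v v' \<Longrightarrow> tens_ok n u \<Longrightarrow> cl_eq n q (tmul u v) (tmul u v')"
  unfolding cl_eq_def by (simp add: tmul_tsub_right [symmetric] clideal_tmul_left)

lemma cl_eq_tsmul: "cl_eq n q u u' \<Longrightarrow> cl_eq n q (tsmul c u) (tsmul c u')"
proof -
  assume "cl_eq n q u u'"
  moreover have "tsub (tsmul c u) (tsmul c u') = tsmul c (tsub u u')"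
    by (rule ext) (simp add: tsub_def tsmul_def algebra_simps)
  ultimately show ?thesis unfolding cl_eq_def by (simp add: clideal_tsmul)
qed

lemma cl_eq_tadd: "cl_eq n q u u' \<Longrightarrow> cl_eq n q v v' \<Longrightarrow> cl_eq n q (tadd u v) (tadd u' v')"
proof -
  assume "cl_eq n q u u'" "cl_eq n q v v'"
  moreover have "tsub (tadd u v) (tadd u' v') = tadd (tsub u u') (tsub v v')"
    by (rule ext) (simp add: tsub_def tadd_def algebra_simps)
  ultimately show ?thesis unfolding cl_eq_def by (simp add: clideal.add)
qed

lemma cl_eq_tsub: "cl_eq n q u u' \<Longrightarrow> cl_eq n q v v' \<Longrightarrow> cl_eq n q (tsub u v) (tsub u' v')"
proof -
  assume "cl_eq n q u u'" "cl_eq n q v v'"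
  moreover have "tsub (tsub u v) (tsub u' v') = tsub (tsub u u') (tsub v v')"
    by (rule ext) (simp add: tsub_def algebra_simps)
  ultimately show ?thesis unfolding cl_eq_def by (simp add: clideal_tsub)
qed

section \<open>Vectors and the Clifford relations\<close>

definition polar :: "((nat \<Rightarrow> 'a) \<Rightarrow> 'a) \<Rightarrow> (nat \<Rightarrow> 'a) \<Rightarrow> (nat \<Rightarrow> 'a) \<Rightarrow> 'a::comm_ring_1" where
  "polar q x y = q (\<lambda>k. x k + y k) - q x - q y"

lemma polar_commute: "polar q x y = polar q y x"
  unfolding polar_def by (simp add: add.commute)

lemma vecsp_add [intro]:
  fixes x y :: "nat \<Rightarrow> 'a::comm_ring_1"
  shows "x \<in> vecsp n \<Longrightarrow> y \<in> vecsp n \<Longrightarrow> (\<lambda>k. x k + y k) \<in> vecsp n"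
  unfolding vecsp_def by auto

lemma vecsp_scale [intro]:
  fixes x :: "nat \<Rightarrow> 'a::comm_ring_1"
  shows "x \<in> vecsp n \<Longrightarrow> (\<lambda>k. c * x k) \<in> vecsp n"
  unfolding vecsp_def by auto

lemma tvec_scale: "tvec (\<lambda>k. c * x k) = tsmul c (tvec x)"
  by (rule ext) (simp add: tvec_def tsmul_def split: list.splits)

lemma tvec_add: "tvec (\<lambda>k. x k + y k) = tadd (tvec x) (tvec y)"
  by (rule ext) (simp add: tvec_def tadd_def split: list.splits)

lemma tvec_lincomb: "tvec (\<lambda>k. c * x k + d * y k) = tadd (tsmul c (tvec x)) (tsmul d (tvec y))"
  by (rule ext) (simp add: tvec_def tadd_def tsmul_def split: list.splits)

lemma cl_eq_tvec_square:
  "x \<in> vecsp n \<Longrightarrow> cl_eq n q (tmul (tvec x) (tvec x)) (tsmul (q x) tone)"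
  unfolding cl_eq_def using clideal.gen[of x n tone tone q] by auto

lemma cl_eq_tvec_anticommutator:
  assumes "x \<in> vecsp n" "y \<in> vecsp n"
  shows "cl_eq n q (tadd (tmul (tvec x) (tvec y)) (tmul (tvec y) (tvec x))) (tsmul (polar q x y) tone)"
proof -
  let ?X = "tvec x" and ?Y = "tvec y" and ?S = "tvec (\<lambda>k. x k + y k)"
  have "tadd (tmul ?X ?Y) (tmul ?Y ?X) = tsub (tsub (tmul ?S ?S) (tmul ?X ?X)) (tmul ?Y ?Y)"
    unfolding tvec_add tmul_tadd_left tmul_tadd_right
    by (rule ext) (simp add: tsub_def tadd_def)
  also have "cl_eq n q \<dots>
      (tsub (tsub (tsmul (q (\<lambda>k. x k + y k)) tone) (tsmul (q x) tone)) (tsmul (q y) tone))"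
    using assms by (intro cl_eq_tsub cl_eq_tvec_square) auto
  also have "\<dots> = tsmul (polar q x y) tone"
    by (rule ext) (simp add: tsub_def tsmul_def polar_def algebra_simps)
  finally show ?thesis .
qed

lemma cl_eq_tvec_orth_anticommute:
  assumes "x \<in> vecsp n" "y \<in> vecsp n" "polar q x y = 0"
  shows "cl_eq n q (tmul (tvec y) (tvec x)) (tsmul (-1) (tmul (tvec x) (tvec y)))"
proof -
  have "tmul (tvec y) (tvec x)
      = tadd (tsmul (-1) (tmul (tvec x) (tvec y))) (tadd (tmul (tvec x) (tvec y)) (tmul (tvec y) (tvec x)))"
    by (rule ext) (simp add: tadd_def tsmul_def)
  also have "cl_eq n q \<dots> (tadd (tsmul (-1) (tmul (tvec x) (tvec y))) (tsmul 0 tone))"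
    using cl_eq_tvec_anticommutator[OF assms(1,2), of q] assms(3) by (intro cl_eq_tadd) auto
  also have "\<dots> = tsmul (-1) (tmul (tvec x) (tvec y))"
    by (rule ext) (simp add: tadd_def tsmul_def)
  finally show ?thesis .
qed

lemma cl_eq_tvec_conj_tvec:
  assumes "x \<in> vecsp n" "y \<in> vecsp n"
  shows "cl_eq n q (tmul (tvec y) (tmul (tvec x) (tvec y))) (tvec (\<lambda>k. polar q x y * y k - q y * x k))"
proof -
  let ?X = "tvec x" and ?Y = "tvec y"
  have "tmul ?Y (tmul ?X ?Y) = tsub (tmul ?Y (tadd (tmul ?X ?Y) (tmul ?Y ?X))) (tmul (tmul ?Y ?Y) ?X)"
    by (simp add: tmul_tadd_right tmul_assoc) (rule ext, simp add: tsub_def tadd_def)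
  also have "cl_eq n q \<dots> (tsub (tmul ?Y (tsmul (polar q x y) tone)) (tmul (tsmul (q y) tone) ?X))"
    using assms
    by (intro cl_eq_tsub cl_eq_tmul_right cl_eq_tmul_left cl_eq_tvec_anticommutator cl_eq_tvec_square) auto
  also have "\<dots> = tvec (\<lambda>k. polar q x y * y k - q y * x k)"
    by simp (rule ext, simp add: tsub_def tsmul_def tvec_def split: list.splits)
  finally show ?thesis .
qed

section \<open>Products of vectors\<close>

definition vprod :: "(nat \<Rightarrow> 'a::comm_ring_1) list \<Rightarrow> 'a tens" where
  "vprod xs = foldr (\<lambda>x u. tmul (tvec x) u) xs tone"

lemma vprod_Nil [simp]: "vprod [] = tone"
  by (simp add: vprod_def)

lemma vprod_Cons [simp]: "vprod (x # xs) = tmul (tvec x) (vprod xs)"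
  by (simp add: vprod_def)

lemma vprod_append: "vprod (xs @ ys) = tmul (vprod xs) (vprod ys)"
  by (induction xs) (simp_all add: tmul_assoc)

lemma vprod_snoc: "vprod (xs @ [y]) = tmul (vprod xs) (tvec y)"
  by (simp add: vprod_append)

lemma tens_ok_vprod [intro]: "set xs \<subseteq> vecsp n \<Longrightarrow> tens_ok n (vprod xs)"
  by (induction xs) auto

lemma trev_vprod: "trev (vprod xs) = vprod (rev (xs::(nat \<Rightarrow> 'a::comm_ring_1) list))"
proof (induction xs)
  case Nil
  then show ?case by (rule ext) (simp add: trev_def tone_def)
next
  case (Cons x xs)
  then show ?case by (simp add: trev_tmul vprod_snoc)
qed

lemma vprod_nonzero_length: "vprod xs w \<noteq> 0 \<Longrightarrow> length w = length xs"
proof (induction xs arbitrary: w)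
  case Nil
  then show ?case by (simp add: tone_def split: if_splits)
next
  case (Cons x xs)
  then obtain u v where "w = u @ v" "tvec x u \<noteq> 0" "vprod xs v \<noteq> 0"
    by (auto elim: tmul_nonzeroD)
  moreover from this have "length u = 1"
    by (auto simp: tvec_def split: list.splits)
  ultimately show ?case using Cons.IH by auto
qed

lemma cl_eq_vprod_rev_vprod:
  "set xs \<subseteq> vecsp n \<Longrightarrow>
   cl_eq n q (tmul (vprod (rev xs)) (vprod xs)) (tsmul (prod_list (map q xs)) tone)"
proof (induction xs)
  case Nil
  then show ?case by auto
next
  case (Cons x xs)
  let ?R = "vprod (rev xs)" and ?P = "vprod xs" and ?X = "tvec x"
  have ok: "tens_ok n ?R" "tens_ok n ?P" "x \<in> vecsp n"
    using Cons.prems by (auto intro!: tens_ok_vprod)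
  have "tmul (vprod (rev (x # xs))) (vprod (x # xs)) = tmul ?R (tmul (tmul ?X ?X) ?P)"
    by (simp add: vprod_snoc tmul_assoc)
  also have "cl_eq n q \<dots> (tmul ?R (tmul (tsmul (q x) tone) ?P))"
    using ok by (intro cl_eq_tmul_right cl_eq_tmul_left cl_eq_tvec_square)
  also have "\<dots> = tsmul (q x) (tmul ?R ?P)"
    by simp
  also have "cl_eq n q \<dots> (tsmul (q x) (tsmul (prod_list (map q xs)) tone))"
    using Cons by (intro cl_eq_tsmul) auto
  also have "\<dots> = tsmul (prod_list (map q (x # xs))) tone"
    by simp
  finally show ?case .
qed

lemma cl_eq_vprod_vprod_rev:
  "set xs \<subseteq> vecsp n \<Longrightarrow>
   cl_eq n q (tmul (vprod xs) (vprod (rev xs))) (tsmul (prod_list (map q xs)) tone)"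
  using cl_eq_vprod_rev_vprod[of "rev xs" n q] by (simp add: rev_map [symmetric] prod_list.rev)

lemma cl_eq_vprod_tvec_orth_anticommute:
  "x \<in> vecsp n \<Longrightarrow> set ys \<subseteq> vecsp n \<Longrightarrow> \<forall>y\<in>set ys. polar q x y = 0 \<Longrightarrow>
   cl_eq n q (tmul (vprod ys) (tvec x)) (tsmul ((-1) ^ length ys) (tmul (tvec x) (vprod ys)))"
proof (induction ys)
  case Nil
  then show ?case by auto
next
  case (Cons y ys)
  let ?P = "vprod ys" and ?X = "tvec x" and ?Y = "tvec y"
  have ok: "tens_ok n ?P" "y \<in> vecsp n" "tens_ok n ?X" "tens_ok n ?Y"
    using Cons.prems by auto
  have "tmul (vprod (y # ys)) ?X = tmul ?Y (tmul ?P ?X)"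
    by (simp add: tmul_assoc)
  also have "cl_eq n q \<dots> (tmul ?Y (tsmul ((-1) ^ length ys) (tmul ?X ?P)))"
    using Cons ok by (intro cl_eq_tmul_right) auto
  also have "\<dots> = tsmul ((-1) ^ length ys) (tmul (tmul ?Y ?X) ?P)"
    by (simp add: tmul_assoc)
  also have "cl_eq n q \<dots> (tsmul ((-1) ^ length ys) (tmul (tsmul (-1) (tmul ?X ?Y)) ?P))"
    using Cons.prems ok by (intro cl_eq_tsmul cl_eq_tmul_left cl_eq_tvec_orth_anticommute) auto
  also have "\<dots> = tsmul ((-1) ^ length (y # ys)) (tmul ?X (vprod (y # ys)))"
    by (simp add: tmul_assoc)
  finally show ?case .
qed

lemma cl_eq_vprod_square:
  "set ys \<subseteq> vecsp n \<Longrightarrow> sorted_wrt (\<lambda>x y. polar q x y = 0) ys \<Longrightarrow>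
   cl_eq n q (tmul (vprod ys) (vprod ys))
     (tsmul ((-1) ^ (length ys * (length ys - 1) div 2) * prod_list (map q ys)) tone)"
proof (induction ys)
  case Nil
  then show ?case by auto
next
  case (Cons x ys)
  let ?P = "vprod ys" and ?X = "tvec x" and ?k = "length ys"
  have ok: "tens_ok n ?P" "x \<in> vecsp n" "tens_ok n ?X"
    using Cons.prems by auto
  have sign: "(-1::'a) ^ (length (x # ys) * (length (x # ys) - 1) div 2)
      = (-1) ^ ?k * (-1) ^ (?k * (?k - 1) div 2)"
  proof -
    have "Suc ?k * (Suc ?k - 1) = 2 * ?k + ?k * (?k - 1)"
      by (cases ?k) (auto simp: algebra_simps)
    then have "Suc ?k * (Suc ?k - 1) div 2 = ?k + ?k * (?k - 1) div 2"
      by simp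
    then show ?thesis by (simp only: length_Cons power_add)
  qed
  have "tmul (vprod (x # ys)) (vprod (x # ys)) = tmul ?X (tmul (tmul ?P ?X) ?P)"
    by (simp add: tmul_assoc)
  also have "cl_eq n q \<dots> (tmul ?X (tmul (tsmul ((-1) ^ ?k) (tmul ?X ?P)) ?P))"
    using Cons.prems ok by (intro cl_eq_tmul_right cl_eq_tmul_left cl_eq_vprod_tvec_orth_anticommute) auto
  also have "\<dots> = tsmul ((-1) ^ ?k) (tmul (tmul ?X ?X) (tmul ?P ?P))"
    by (simp add: tmul_assoc)
  also have "cl_eq n q \<dots> (tsmul ((-1) ^ ?k) (tmul (tsmul (q x) tone) (tmul ?P ?P)))"
    using ok by (intro cl_eq_tsmul cl_eq_tmul_left cl_eq_tvec_square tens_ok_tmul)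
  also have "\<dots> = tsmul ((-1) ^ ?k * q x) (tmul ?P ?P)"
    by simp
  also have "cl_eq n q \<dots>
      (tsmul ((-1) ^ ?k * q x) (tsmul ((-1) ^ (?k * (?k - 1) div 2) * prod_list (map q ys)) tone))"
    using Cons by (intro cl_eq_tsmul) auto
  also have "\<dots> = tsmul ((-1) ^ (length (x # ys) * (length (x # ys) - 1) div 2)
                        * prod_list (map q (x # ys))) tone"
    by (simp only: sign) (simp add: algebra_simps)
  finally show ?case .
qed

lemma cl_eq_vprod_conj_tvec:
  "set ys \<subseteq> vecsp n \<Longrightarrow> x \<in> vecsp n \<Longrightarrow>
   \<exists>z\<in>vecsp n. cl_eq n q (tmul (tmul (vprod ys) (tvec x)) (vprod (rev ys))) (tvec z)"
proof (induction ys)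
  case Nil
  then show ?case by auto
next
  case (Cons y ys)
  then obtain z where z: "z \<in> vecsp n"
    "cl_eq n q (tmul (tmul (vprod ys) (tvec x)) (vprod (rev ys))) (tvec z)"
    by auto
  have y: "y \<in> vecsp n"
    using Cons.prems by auto
  have "tmul (tmul (vprod (y # ys)) (tvec x)) (vprod (rev (y # ys)))
      = tmul (tvec y) (tmul (tmul (tmul (vprod ys) (tvec x)) (vprod (rev ys))) (tvec y))"
    by (simp add: vprod_snoc tmul_assoc)
  also have "cl_eq n q \<dots> (tmul (tvec y) (tmul (tvec z) (tvec y)))"
    using z y by (intro cl_eq_tmul_right cl_eq_tmul_left) auto
  also have "cl_eq n q \<dots> (tvec (\<lambda>k. polar q z y * y k - q y * z k))"
    using z y by (intro cl_eq_tvec_conj_tvec)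
  finally have "cl_eq n q (tmul (tmul (vprod (y # ys)) (tvec x)) (vprod (rev (y # ys))))
                 (tvec (\<lambda>k. polar q z y * y k - q y * z k))" .
  moreover have "(\<lambda>k. polar q z y * y k - q y * z k) \<in> vecsp n"
    using z y unfolding vecsp_def by auto
  ultimately show ?case by blast
qed

lemma cl_eq_vprod_conj_orth_pair:
  "set ys \<subseteq> vecsp n \<Longrightarrow> u \<in> vecsp n \<Longrightarrow> v \<in> vecsp n \<Longrightarrow>
   \<forall>y\<in>set ys. polar q u y = 0 \<and> polar q v y = 0 \<Longrightarrow>
   cl_eq n q (tmul (vprod ys) (tmul (tmul (tvec u) (tvec v)) (vprod (rev ys))))
             (tsmul (prod_list (map q ys)) (tmul (tvec u) (tvec v)))"
proof (induction ys)
  case Nil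
  then show ?case by auto
next
  case (Cons y ys)
  let ?P = "vprod ys" and ?R = "vprod (rev ys)" and ?Y = "tvec y" and ?U = "tvec u" and ?V = "tvec v"
  have ok: "tens_ok n ?P" "tens_ok n ?R" "y \<in> vecsp n" "tens_ok n ?Y" "tens_ok n ?U" "tens_ok n ?V"
    using Cons.prems by (auto intro!: tens_ok_vprod)
  have uv: "u \<in> vecsp n" "v \<in> vecsp n" and orth: "polar q u y = 0" "polar q v y = 0"
    using Cons.prems by auto
  have "tmul (vprod (y # ys)) (tmul (tmul ?U ?V) (vprod (rev (y # ys))))
      = tmul ?Y (tmul (tmul ?P (tmul (tmul ?U ?V) ?R)) ?Y)"
    by (simp add: tmul_assoc vprod_snoc)
  also have "cl_eq n q \<dots> (tmul ?Y (tmul (tsmul (prod_list (map q ys)) (tmul ?U ?V)) ?Y))"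
    using Cons ok by (intro cl_eq_tmul_right cl_eq_tmul_left) auto
  also have "\<dots> = tsmul (prod_list (map q ys)) (tmul (tmul ?Y ?U) (tmul ?V ?Y))"
    by (simp add: tmul_assoc)
  also have "cl_eq n q \<dots> (tsmul (prod_list (map q ys)) (tmul (tsmul (-1) (tmul ?U ?Y)) (tmul ?V ?Y)))"
    using ok uv orth by (intro cl_eq_tsmul cl_eq_tmul_left cl_eq_tvec_orth_anticommute tens_ok_tmul)
  also have "\<dots> = tsmul (- prod_list (map q ys)) (tmul ?U (tmul (tmul ?Y ?V) ?Y))"
    by (simp add: tmul_assoc)
  also have "cl_eq n q \<dots> (tsmul (- prod_list (map q ys)) (tmul ?U (tmul (tsmul (-1) (tmul ?V ?Y)) ?Y)))"
    using ok uv orth by (intro cl_eq_tsmul cl_eq_tmul_right cl_eq_tmul_left cl_eq_tvec_orth_anticommute)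
  also have "\<dots> = tsmul (prod_list (map q ys)) (tmul (tmul ?U ?V) (tmul ?Y ?Y))"
    by (simp add: tmul_assoc)
  also have "cl_eq n q \<dots> (tsmul (prod_list (map q ys)) (tmul (tmul ?U ?V) (tsmul (q y) tone)))"
    using ok by (intro cl_eq_tsmul cl_eq_tmul_right cl_eq_tvec_square tens_ok_tmul)
  also have "\<dots> = tsmul (prod_list (map q (y # ys))) (tmul ?U ?V)"
    by (simp add: mult.commute)
  finally show ?case .
qed

lemma cl_eq_orth_pair_commute_vprod:
  assumes "set ys \<subseteq> vecsp n" "u \<in> vecsp n" "v \<in> vecsp n"
    "\<forall>y\<in>set ys. polar q u y = 0 \<and> polar q v y = 0"
  shows "cl_eq n q (tmul (vprod ys) (tmul (tvec u) (tvec v))) (tmul (tmul (tvec u) (tvec v)) (vprod ys))"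
proof -
  let ?U = "tvec u" and ?V = "tvec v" and ?P = "vprod ys" and ?s = "(-1::'a) ^ length ys"
  have ok: "tens_ok n ?U" "tens_ok n ?V" "tens_ok n ?P"
    using assms by auto
  have "tmul ?P (tmul ?U ?V) = tmul (tmul ?P ?U) ?V"
    by (simp add: tmul_assoc)
  also have "cl_eq n q \<dots> (tmul (tsmul ?s (tmul ?U ?P)) ?V)"
    using assms ok by (intro cl_eq_tmul_left cl_eq_vprod_tvec_orth_anticommute) auto
  also have "\<dots> = tsmul ?s (tmul ?U (tmul ?P ?V))"
    by (simp add: tmul_assoc)
  also have "cl_eq n q \<dots> (tsmul ?s (tmul ?U (tsmul ?s (tmul ?V ?P))))"
    using assms ok by (intro cl_eq_tsmul cl_eq_tmul_right cl_eq_vprod_tvec_orth_anticommute) auto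
  also have "\<dots> = tmul (tmul ?U ?V) ?P"
    by (simp add: tmul_assoc flip: power_add)
  finally show ?thesis .
qed

lemma cl_inv_vprod:
  fixes xs :: "(nat \<Rightarrow> 'a::field) list"
  assumes "set xs \<subseteq> vecsp n" "prod_list (map q xs) \<noteq> 0"
  shows "cl_inv n q (vprod xs) (tsmul (inverse (prod_list (map q xs))) (vprod (rev xs)))"
proof -
  let ?c = "prod_list (map q xs)"
  have "cl_eq n q (tmul (vprod xs) (vprod (rev xs))) (tsmul ?c tone)"
    and "cl_eq n q (tmul (vprod (rev xs)) (vprod xs)) (tsmul ?c tone)"
    using assms(1) by (rule cl_eq_vprod_vprod_rev, rule cl_eq_vprod_rev_vprod)
  then have "cl_eq n q (tsmul (inverse ?c) (tmul (vprod xs) (vprod (rev xs)))) tone"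
    and "cl_eq n q (tsmul (inverse ?c) (tmul (vprod (rev xs)) (vprod xs))) tone"
    using assms(2) by (auto dest: cl_eq_tsmul[where c="inverse ?c"])
  then show ?thesis
    using assms(1) by (auto simp: cl_inv_def intro!: tens_ok_tsmul tens_ok_vprod)
qed

lemma cl_inv_tsmul:
  fixes c :: "'a::field"
  assumes "cl_inv n q u ui" "c \<noteq> 0"
  shows "cl_inv n q (tsmul c u) (tsmul (inverse c) ui)"
  using assms cl_eq_tsmul[where c="c * inverse c"] by (auto simp: cl_inv_def)

lemma vprod_in_Gamma:
  fixes xs :: "(nat \<Rightarrow> 'a::field) list"
  assumes xs: "set xs \<subseteq> vecsp n" "prod_list (map q xs) \<noteq> 0"
  shows "in_Gamma n q (vprod xs)"
proof -
  let ?c = "prod_list (map q xs)"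
  have "\<exists>y\<in>vecsp n.
          cl_eq n q (tmul (tmul (vprod xs) (tvec x)) (tsmul (inverse ?c) (vprod (rev xs)))) (tvec y)"
    if "x \<in> vecsp n" for x
  proof -
    obtain z where z: "z \<in> vecsp n" "cl_eq n q (tmul (tmul (vprod xs) (tvec x)) (vprod (rev xs))) (tvec z)"
      using cl_eq_vprod_conj_tvec[OF xs(1) \<open>x \<in> vecsp n\<close>] by blast
    then have "cl_eq n q (tmul (tmul (vprod xs) (tvec x)) (tsmul (inverse ?c) (vprod (rev xs))))
                 (tvec (\<lambda>k. inverse ?c * z k))"
      by (auto simp: tvec_scale dest: cl_eq_tsmul[where c="inverse ?c"])
    with z show ?thesis by blast
  qed
  then show ?thesis
    using cl_inv_vprod[OF xs] xs(1) by (auto simp: in_Gamma_def)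
qed

lemma vprod_cl_even: "set xs \<subseteq> vecsp n \<Longrightarrow> even (length xs) \<Longrightarrow> cl_even n q (vprod xs)"
  unfolding cl_even_def by (intro exI[of _ "vprod xs"]) (auto dest: vprod_nonzero_length)

lemma cl_eq_Nrm_vprod:
  "set xs \<subseteq> vecsp n \<Longrightarrow> cl_eq n q (Nrm (vprod xs)) (tsmul (prod_list (map q xs)) tone)"
  unfolding Nrm_def trev_vprod by (rule cl_eq_vprod_rev_vprod)

lemma cl_eq_Nrm_mult_inv:
  assumes "cl_inv n q u ui" "tens_ok n u"
  shows "cl_eq n q (tmul (Nrm u) ui) (trev u)"
proof -
  have "tmul (Nrm u) ui = tmul (trev u) (tmul u ui)"
    by (simp add: Nrm_def tmul_assoc)
  also have "cl_eq n q \<dots> (tmul (trev u) tone)"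
    using assms by (intro cl_eq_tmul_right) (auto simp: cl_inv_def)
  finally show ?thesis by simp
qed

section \<open>The quadratic form of maximal Witt index\<close>

definition hvec :: "nat \<Rightarrow> 'a \<Rightarrow> 'a \<Rightarrow> nat \<Rightarrow> 'a::comm_ring_1" where
  "hvec i c d = (\<lambda>k. c * e_vec i k + d * f_vec i k)"

lemma hvec_apply: "hvec i c d k = (if k = 2*i - 1 then c else 0) + (if k = 2*i then d else 0)"
  by (simp add: hvec_def basis_vec_def)

lemma hvec_at_e: "1 \<le> i \<Longrightarrow> 1 \<le> j \<Longrightarrow> hvec i c d (2*j - Suc 0) = (if j = i then c else 0)"
  unfolding hvec_apply by (auto; presburger)

lemma hvec_at_f: "1 \<le> i \<Longrightarrow> hvec i c d (2*j) = (if j = i then d else 0)"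
  unfolding hvec_apply by (auto; presburger)

lemma hvec_at_0: "1 \<le> i \<Longrightarrow> hvec i c d 0 = 0"
  by (simp add: hvec_apply)

lemma e_vec_eq_hvec: "e_vec i = hvec i (1::'a::comm_ring_1) 0"
  by (rule ext) (simp add: hvec_def)

lemma f_vec_eq_hvec: "f_vec i = hvec i (0::'a::comm_ring_1) 1"
  by (rule ext) (simp add: hvec_def)

lemma tvec_hvec: "tvec (hvec i c d) = tadd (tsmul c (tvec (e_vec i))) (tsmul d (tvec (f_vec i)))"
  unfolding hvec_def by (rule tvec_lincomb)

lemma hvec_in_vecsp: "2*i < n \<Longrightarrow> hvec i c d \<in> vecsp n"
  by (auto simp: vecsp_def hvec_apply)

lemma e0_in_vecsp: "0 < n \<Longrightarrow> basis_vec 0 \<in> vecsp n"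
  by (auto simp: vecsp_def basis_vec_def)

lemma polar_qform:
  "polar (qform a m) x y = 2 * a * x 0 * y 0 + (\<Sum>j=1..m. x (2*j - 1) * y (2*j) + y (2*j - 1) * x (2*j))"
proof -
  have "(\<Sum>j=1..m. (x (2*j - 1) + y (2*j - 1)) * (x (2*j) + y (2*j)))
      = (\<Sum>j=1..m. x (2*j - 1) * x (2*j)) + (\<Sum>j=1..m. y (2*j - 1) * y (2*j))
        + (\<Sum>j=1..m. x (2*j - 1) * y (2*j) + y (2*j - 1) * x (2*j))"
    by (simp add: sum.distrib [symmetric] algebra_simps)
  then show ?thesis
    by (simp add: polar_def qform_def power2_eq_square algebra_simps)
qed

lemma qform_hvec: "1 \<le> i \<Longrightarrow> i \<le> m \<Longrightarrow> qform a m (hvec i c d) = c * d"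
proof -
  assume i: "1 \<le> i" "i \<le> m"
  have "(\<Sum>j=1..m. hvec i c d (2*j - 1) * hvec i c d (2*j)) = (\<Sum>j=1..m. if j = i then c * d else 0)"
    using i by (intro sum.cong) (auto simp: hvec_at_e hvec_at_f)
  then show ?thesis
    using i by (simp add: qform_def hvec_at_0)
qed

lemma qform_e0: "qform a m (basis_vec 0) = a"
proof -
  have "(\<Sum>j=1..m. basis_vec 0 (2*j - 1) * basis_vec 0 (2*j)) = (0::'a)"
    by (intro sum.neutral) (auto simp: basis_vec_def)
  then show ?thesis
    by (simp add: qform_def basis_vec_def)
qed

lemma polar_hvec_same:
  "1 \<le> i \<Longrightarrow> i \<le> m \<Longrightarrow> polar (qform a m) (hvec i c d) (hvec i c' d') = c * d' + c' * d"
proof -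
  assume i: "1 \<le> i" "i \<le> m"
  have "(\<Sum>j=1..m. hvec i c d (2*j - 1) * hvec i c' d' (2*j) + hvec i c' d' (2*j - 1) * hvec i c d (2*j))
      = (\<Sum>j=1..m. if j = i then c * d' + c' * d else 0)"
    using i by (intro sum.cong) (auto simp: hvec_at_e hvec_at_f)
  then show ?thesis
    using i by (simp add: polar_qform hvec_at_0)
qed

lemma polar_hvec_other:
  "1 \<le> i \<Longrightarrow> 1 \<le> j \<Longrightarrow> i \<noteq> j \<Longrightarrow> polar (qform a m) (hvec i c d) (hvec j c' d') = 0"
  unfolding polar_qform by (simp add: hvec_at_0) (intro sum.neutral, auto simp: hvec_at_e hvec_at_f)

lemma polar_hvec_e0: "1 \<le> i \<Longrightarrow> polar (qform a m) (hvec i c d) (basis_vec 0) = 0"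
  unfolding polar_qform by (simp add: hvec_at_0) (intro sum.neutral, auto simp: basis_vec_def)

lemma polar_e0_hvec: "1 \<le> i \<Longrightarrow> polar (qform a m) (basis_vec 0) (hvec i c d) = 0"
  by (subst polar_commute) (rule polar_hvec_e0)

lemma cl_eq_hvec_mult:
  fixes a :: "'a::field"
  assumes i: "1 \<le> i" "i \<le> m"
  shows "cl_eq (2*m + 1) (qform a m) (tmul (tvec (hvec i c d)) (tvec (hvec i c' d')))
           (tadd (tsmul (d * c') tone) (tsmul (c * d' - d * c') (tmul (tvec (e_vec i)) (tvec (f_vec i)))))"
proof -
  let ?n = "2*m + 1" and ?q = "qform a m"
  let ?E = "tvec (e_vec i) :: 'a tens" and ?F = "tvec (f_vec i) :: 'a tens"
  have e: "(e_vec i :: nat \<Rightarrow> 'a) \<in> vecsp ?n" "?q (e_vec i) = 0"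
    using i unfolding e_vec_eq_hvec by (auto simp: hvec_in_vecsp qform_hvec)
  have f: "(f_vec i :: nat \<Rightarrow> 'a) \<in> vecsp ?n" "?q (f_vec i) = 0"
    using i unfolding f_vec_eq_hvec by (auto simp: hvec_in_vecsp qform_hvec)
  have "polar ?q (e_vec i) (f_vec i) = 1"
    using i unfolding e_vec_eq_hvec f_vec_eq_hvec by (simp add: polar_hvec_same)
  have FE: "cl_eq ?n ?q (tmul ?F ?E) (tsub tone (tmul ?E ?F))"
  proof -
    have "tmul ?F ?E = tsub (tadd (tmul ?E ?F) (tmul ?F ?E)) (tmul ?E ?F)"
      by (rule ext) (simp add: tsub_def tadd_def)
    also have "cl_eq ?n ?q \<dots> (tsub (tsmul 1 tone) (tmul ?E ?F))"
      using cl_eq_tvec_anticommutator[OF e(1) f(1), of ?q] \<open>polar ?q (e_vec i) (f_vec i) = 1\<close>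
      by (intro cl_eq_tsub cl_eq_refl) simp
    finally show ?thesis by simp
  qed
  have "tmul (tvec (hvec i c d)) (tvec (hvec i c' d'))
      = tadd (tadd (tsmul (c*c') (tmul ?E ?E)) (tsmul (c*d') (tmul ?E ?F)))
             (tadd (tsmul (d*c') (tmul ?F ?E)) (tsmul (d*d') (tmul ?F ?F)))"
    unfolding tvec_hvec
    by (simp add: tmul_tadd_left tmul_tadd_right) (rule ext, simp add: tadd_def tsmul_def algebra_simps)
  also have "cl_eq ?n ?q \<dots>
      (tadd (tadd (tsmul (c*c') (tsmul 0 tone)) (tsmul (c*d') (tmul ?E ?F)))
            (tadd (tsmul (d*c') (tsub tone (tmul ?E ?F))) (tsmul (d*d') (tsmul 0 tone))))"
    using FE cl_eq_tvec_square[OF e(1), of ?q] cl_eq_tvec_square[OF f(1), of ?q] e(2) f(2)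
    by (intro cl_eq_tadd cl_eq_tsmul cl_eq_refl) auto
  also have "\<dots> = tadd (tsmul (d * c') tone) (tsmul (c * d' - d * c') (tmul ?E ?F))"
    by (rule ext) (simp add: tadd_def tsmul_def tsub_def algebra_simps)
  finally show ?thesis .
qed

lemma hvec_conj_hvec:
  "1 \<le> i \<Longrightarrow> i \<le> m \<Longrightarrow>
   (\<lambda>k. polar (qform a m) (hvec i c d) (hvec i 1 b) * hvec i 1 b k - qform a m (hvec i 1 b) * hvec i c d k)
   = hvec i d (c * b * b)"
  by (rule ext) (simp add: polar_hvec_same qform_hvec hvec_apply algebra_simps)

text \<open>The even part of the Clifford algebra of the hyperbolic plane \<open>\<langle>e\<^sub>i, f\<^sub>i\<rangle>\<close> is commutative
  but not central; conjugation by an anisotropic vector of the plane is its nontrivial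
  automorphism, which reverses products of two vectors.\<close>

lemma cl_eq_hvec_conj_reverses:
  fixes a :: "'a::field"
  assumes i: "1 \<le> i" "i \<le> m" and b: "b \<noteq> 0"
  shows "cl_eq (2*m + 1) (qform a m)
     (tmul (tvec (hvec i 1 b)) (tmul (tmul (tvec (hvec i c d)) (tvec (hvec i c' d'))) (tvec (hvec i 1 b))))
     (tsmul b (tmul (tvec (hvec i c' d')) (tvec (hvec i c d))))"
proof -
  let ?n = "2*m + 1" and ?q = "qform a m"
  let ?Y = "tvec (hvec i 1 b)" and ?X = "tvec (hvec i c d)" and ?X' = "tvec (hvec i c' d')"
  let ?EF = "tmul (tvec (e_vec i)) (tvec (f_vec i)) :: 'a tens"
  have vs: "\<And>c d. hvec i c d \<in> vecsp ?n"
    using i by (simp add: hvec_in_vecsp)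
  have ok: "\<And>c d. tens_ok ?n (tvec (hvec i c d))"
    using vs by auto
  have conj: "cl_eq ?n ?q (tmul ?Y (tmul (tvec (hvec i c d)) ?Y)) (tvec (hvec i d (c * b * b)))" for c d
  proof -
    have "cl_eq ?n ?q (tmul ?Y (tmul (tvec (hvec i c d)) ?Y))
      (tvec (\<lambda>k. polar ?q (hvec i c d) (hvec i 1 b) * hvec i 1 b k - ?q (hvec i 1 b) * hvec i c d k))"
      by (rule cl_eq_tvec_conj_tvec) (rule vs)+
    then show ?thesis
      unfolding hvec_conj_hvec[OF i] .
  qed
  have square: "cl_eq ?n ?q (tsmul b tone) (tmul ?Y ?Y)"
    using cl_eq_sym[OF cl_eq_tvec_square[OF vs, of ?q 1 b]] qform_hvec[OF i, of a 1 b] by simp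
  have "tsmul b (tmul ?Y (tmul (tmul ?X ?X') ?Y)) = tmul ?Y (tmul ?X (tmul (tsmul b tone) (tmul ?X' ?Y)))"
    by (simp add: tmul_assoc)
  also have "cl_eq ?n ?q \<dots> (tmul ?Y (tmul ?X (tmul (tmul ?Y ?Y) (tmul ?X' ?Y))))"
    using square ok by (intro cl_eq_tmul_right cl_eq_tmul_left tens_ok_tmul)
  also have "\<dots> = tmul (tmul ?Y (tmul ?X ?Y)) (tmul ?Y (tmul ?X' ?Y))"
    by (simp add: tmul_assoc)
  also have "cl_eq ?n ?q \<dots> (tmul (tvec (hvec i d (c * b * b))) (tmul ?Y (tmul ?X' ?Y)))"
    using conj ok by (intro cl_eq_tmul_left tens_ok_tmul)
  also have "cl_eq ?n ?q \<dots> (tmul (tvec (hvec i d (c * b * b))) (tvec (hvec i d' (c' * b * b))))"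
    using conj ok by (intro cl_eq_tmul_right)
  also have "cl_eq ?n ?q \<dots>
      (tadd (tsmul (c * b * b * d') tone) (tsmul (d * (c' * b * b) - c * b * b * d') ?EF))"
    using cl_eq_hvec_mult[OF i] .
  also have "\<dots> = tsmul (b * b) (tadd (tsmul (d' * c) tone) (tsmul (c' * d - d' * c) ?EF))"
    by (rule ext) (simp add: tadd_def tsmul_def algebra_simps)
  also have "cl_eq ?n ?q \<dots> (tsmul (b * b) (tmul ?X' ?X))"
    by (intro cl_eq_tsmul cl_eq_sym[OF cl_eq_hvec_mult[OF i]])
  finally have "cl_eq ?n ?q (tsmul (inverse b) (tsmul b (tmul ?Y (tmul (tmul ?X ?X') ?Y))))
                            (tsmul (inverse b) (tsmul (b * b) (tmul ?X' ?X)))"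
    by (rule cl_eq_tsmul)
  then show ?thesis
    using b by (simp add: field_simps)
qed

section \<open>The elements s and t\<close>

definition s_factor :: "'a::field \<Rightarrow> nat \<Rightarrow> nat \<Rightarrow> 'a" where
  "s_factor a i = hvec i 1 (if i = 1 then inverse a else 1)"

definition s_factors :: "'a::field \<Rightarrow> nat \<Rightarrow> (nat \<Rightarrow> 'a) list" where
  "s_factors a m = basis_vec 0 # map (s_factor a) [1..<m+1]"

definition t_pair :: "(nat \<Rightarrow> 'a::comm_ring_1) \<Rightarrow> nat \<Rightarrow> (nat \<Rightarrow> 'a) list" where
  "t_pair lam i = [hvec i 1 1, hvec i 1 (lam i)]"

lemma T_elem_eq_vprod:
  fixes lam :: "nat \<Rightarrow> 'a::field"
  shows "T_elem m lam = tsmul (lam 0) (vprod (concat (map (t_pair lam) [1..<m+1])))"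
proof -
  have "tprod_list (map (\<lambda>i. tmul (tadd (tvec (e_vec i)) (tvec (f_vec i)))
                                    (tadd (tvec (e_vec i)) (tsmul (lam i) (tvec (f_vec i))))) L)
      = vprod (concat (map (t_pair lam) L))" for L
  proof (induction L)
    case Nil
    then show ?case by (simp add: tprod_list_def)
  next
    case (Cons i L)
    have "tadd (tvec (e_vec i)) (tvec (f_vec i)) = tvec (hvec i 1 (1::'a))"
      and "tadd (tvec (e_vec i)) (tsmul (lam i) (tvec (f_vec i))) = tvec (hvec i 1 (lam i))"
      by (simp_all add: tvec_hvec)
    then show ?case
      using Cons by (simp add: tprod_list_def t_pair_def tmul_assoc)
  qed
  then show ?thesis by (simp add: T_elem_def)
qed

lemma t_pairs_in_vecsp:
  "set L \<subseteq> {..m} \<Longrightarrow> set (concat (map (t_pair lam) L)) \<subseteq> vecsp (2*m + 1)"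
  by (auto simp: t_pair_def hvec_in_vecsp)

lemma qform_t_pairs_nonzero:
  fixes lam :: "nat \<Rightarrow> 'a::field"
  assumes "\<forall>i\<le>m. lam i \<noteq> 0"
  shows "prod_list (map (qform a m) (concat (map (t_pair lam) [1..<m+1]))) \<noteq> 0"
  using assms by (auto simp: prod_list_zero_iff t_pair_def qform_hvec)

lemma length_s_factors [simp]: "length (s_factors a m) = m + 1"
  by (simp add: s_factors_def)

lemma s_factors_in_vecsp: "set (s_factors a m) \<subseteq> vecsp (2*m + 1)"
  by (auto simp: s_factors_def s_factor_def hvec_in_vecsp e0_in_vecsp)

lemma qform_s_factors:
  fixes a :: "'a::field"
  assumes "1 \<le> m" "a \<noteq> 0"
  shows "prod_list (map (qform a m) (s_factors a m)) = 1"
proof -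
  have "prod_list (map (qform a m \<circ> s_factor a) [1..<m+1])
      = prod_list (map (\<lambda>i. if i = 1 then inverse a else 1) [1..<m+1])"
    by (intro arg_cong [where f=prod_list] map_cong) (auto simp: s_factor_def qform_hvec)
  also have "\<dots> = (\<Prod>i\<in>{1..<m+1}. if i = 1 then inverse a else 1)"
    by (metis distinct_upt prod.distinct_set_conv_list set_upt)
  also have "\<dots> = inverse a"
    using assms(1) by (simp add: prod.delta)
  finally show ?thesis
    using assms(2) by (simp add: s_factors_def qform_e0)
qed

lemma s_factors_orthogonal: "sorted_wrt (\<lambda>x y. polar (qform a m) x y = 0) (s_factors a m)"
proof -
  have "sorted_wrt (\<lambda>x y. polar (qform a m) x y = 0) (map (s_factor a) [1..<m+1])"
    unfolding sorted_wrt_map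
    by (rule sorted_wrt_mono_rel [OF _ sorted_wrt_upt]) (auto simp: s_factor_def polar_hvec_other)
  then show ?thesis
    by (auto simp: s_factors_def s_factor_def polar_e0_hvec)
qed

lemma cl_eq_s_factors_square:
  fixes a :: "'a::field"
  assumes "1 \<le> m" "a \<noteq> 0"
  shows "cl_eq (2*m + 1) (qform a m) (tmul (vprod (s_factors a m)) (vprod (s_factors a m)))
                                     (tsmul ((-1) ^ (m * (m + 1) div 2)) tone)"
proof -
  have "(-1::'a) ^ ((m + 1) * (m + 1 - 1) div 2) * 1 = (-1) ^ (m * (m + 1) div 2)"
    by (simp add: mult.commute)
  with cl_eq_vprod_square [OF s_factors_in_vecsp [where a=a and m=m] s_factors_orthogonal]
  show ?thesis
    unfolding length_s_factors qform_s_factors [OF assms] by simp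
qed

text \<open>Every factor of \<open>s\<close> other than \<open>s_factor a i\<close> is orthogonal to the plane \<open>\<langle>e\<^sub>i, f\<^sub>i\<rangle>\<close>, and
  the \<open>q\<close>-values of all factors multiply to \<open>1\<close>.\<close>

lemma cl_eq_conj_s_factors_hvec_pair:
  fixes a :: "'a::field"
  assumes i: "1 \<le> i" "i \<le> m" and a: "a \<noteq> 0"
  shows "cl_eq (2*m + 1) (qform a m)
     (tmul (tmul (vprod (s_factors a m)) (tmul (tvec (hvec i c d)) (tvec (hvec i c' d'))))
           (vprod (rev (s_factors a m))))
     (tmul (tvec (hvec i c' d')) (tvec (hvec i c d)))"
proof -
  let ?n = "2*m + 1" and ?q = "qform a m"
  define pre where "pre = basis_vec 0 # map (s_factor a) [1..<i]"
  define post where "post = map (s_factor a) [Suc i..<m+1]"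
  define b where "b = (if i = 1 then inverse a else (1::'a))"
  let ?Y = "tvec (s_factor a i)" and ?X = "tvec (hvec i c d)" and ?X' = "tvec (hvec i c' d')"
  have split: "s_factors a m = pre @ s_factor a i # post"
  proof -
    have "[1..<m+1] = [1..<i] @ i # [Suc i..<m+1]"
      using i upt_add_eq_append [of 1 i "m + 1 - i"] upt_conv_Cons [of i "m + 1"] by simp
    then show ?thesis by (simp add: s_factors_def pre_def post_def)
  qed
  have vpre: "set pre \<subseteq> vecsp ?n" and vpost: "set post \<subseteq> vecsp ?n" and vy: "s_factor a i \<in> vecsp ?n"
    using s_factors_in_vecsp [where a=a and m=m] unfolding split by auto
  have vx: "hvec i c d \<in> vecsp ?n" "hvec i c' d' \<in> vecsp ?n"
    using i by (auto simp: hvec_in_vecsp)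
  have b: "b \<noteq> 0" "s_factor a i = hvec i 1 b"
    using a by (simp_all add: b_def s_factor_def)
  have orth_post: "\<forall>y\<in>set post. polar ?q (hvec i c d) y = 0 \<and> polar ?q (hvec i c' d') y = 0"
    using i by (auto simp: post_def s_factor_def polar_hvec_other)
  have orth_pre: "\<forall>y\<in>set pre. polar ?q (hvec i c' d') y = 0 \<and> polar ?q (hvec i c d) y = 0"
    using i by (auto simp: pre_def s_factor_def polar_hvec_other polar_hvec_e0)
  have norm: "prod_list (map ?q post) * b * prod_list (map ?q pre) = 1"
    using qform_s_factors [of m a] i a unfolding split
    by (simp add: s_factor_def qform_hvec b_def ac_simps)
  have "tmul (tmul (vprod (s_factors a m)) (tmul ?X ?X')) (vprod (rev (s_factors a m)))
      = tmul (vprod pre) (tmul (tmul ?Y (tmul (tmul (vprod post) (tmul (tmul ?X ?X') (vprod (rev post)))) ?Y))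
                                (vprod (rev pre)))"
    unfolding split by (simp add: vprod_append tmul_assoc)
  also have "cl_eq ?n ?q \<dots>
      (tmul (vprod pre) (tmul (tmul ?Y (tmul (tsmul (prod_list (map ?q post)) (tmul ?X ?X')) ?Y))
                                                 (vprod (rev pre))))"
    using cl_eq_vprod_conj_orth_pair [OF vpost vx orth_post] vpre vy
    by (intro cl_eq_tmul_right cl_eq_tmul_left) (auto intro!: tens_ok_vprod)
  also have "\<dots> = tsmul (prod_list (map ?q post))
                    (tmul (vprod pre) (tmul (tmul ?Y (tmul (tmul ?X ?X') ?Y)) (vprod (rev pre))))"
    by simp
  also have "cl_eq ?n ?q \<dots> (tsmul (prod_list (map ?q post))
                               (tmul (vprod pre) (tmul (tsmul b (tmul ?X' ?X)) (vprod (rev pre)))))"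
    using cl_eq_hvec_conj_reverses [OF i b(1), of a c d c' d'] vpre unfolding b(2)
    by (intro cl_eq_tsmul cl_eq_tmul_right cl_eq_tmul_left) (auto intro!: tens_ok_vprod)
  also have "\<dots> = tsmul (prod_list (map ?q post) * b)
                    (tmul (vprod pre) (tmul (tmul ?X' ?X) (vprod (rev pre))))"
    by simp
  also have "cl_eq ?n ?q \<dots>
      (tsmul (prod_list (map ?q post) * b) (tsmul (prod_list (map ?q pre)) (tmul ?X' ?X)))"
    using cl_eq_vprod_conj_orth_pair [OF vpre vx(2) vx(1) orth_pre] by (intro cl_eq_tsmul)
  also have "\<dots> = tmul ?X' ?X"
    using norm by simp
  finally show ?thesis .
qed

lemma cl_eq_conj_s_factors_t_pairs:
  fixes a :: "'a::field"
  assumes m: "1 \<le> m" and a: "a \<noteq> 0"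
  shows "distinct L \<Longrightarrow> set L \<subseteq> {1..m} \<Longrightarrow>
    cl_eq (2*m + 1) (qform a m)
      (tmul (tmul (vprod (s_factors a m)) (vprod (concat (map (t_pair lam) L)))) (vprod (rev (s_factors a m))))
      (vprod (rev (concat (map (t_pair lam) L))))"
proof (induction L)
  case Nil
  then show ?case
    using cl_eq_vprod_vprod_rev [OF s_factors_in_vecsp [where a=a and m=m], of "qform a m"]
      qform_s_factors [OF m a]
    by simp
next
  case (Cons i L)
  let ?n = "2*m + 1" and ?q = "qform a m"
  let ?s = "vprod (s_factors a m)" and ?si = "vprod (rev (s_factors a m))"
  let ?U = "tvec (hvec i 1 (1::'a))" and ?V = "tvec (hvec i 1 (lam i))"
  let ?W = "vprod (concat (map (t_pair lam) L))" and ?R = "rev (concat (map (t_pair lam) L))"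
  have i: "1 \<le> i" "i \<le> m"
    using Cons.prems by auto
  have vL: "set (concat (map (t_pair lam) L)) \<subseteq> vecsp ?n"
    using Cons.prems by (intro t_pairs_in_vecsp) auto
  then have vR: "set ?R \<subseteq> vecsp ?n"
    by simp
  have ok: "tens_ok ?n ?s" "tens_ok ?n ?si" "tens_ok ?n ?U" "tens_ok ?n ?V" "tens_ok ?n ?W"
    using s_factors_in_vecsp [where a=a and m=m] vL i by (auto simp: hvec_in_vecsp intro!: tens_ok_vprod)
  have orth: "\<forall>r\<in>set ?R. polar ?q (hvec i 1 (lam i)) r = 0 \<and> polar ?q (hvec i 1 1) r = 0"
  proof
    fix r
    assume "r \<in> set ?R"
    then obtain j where j: "j \<in> set L" "r = hvec j 1 1 \<or> r = hvec j 1 (lam j)"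
      by (auto simp: t_pair_def)
    moreover have "1 \<le> j" "j \<noteq> i"
      using j(1) Cons.prems by auto
    ultimately show "polar ?q (hvec i 1 (lam i)) r = 0 \<and> polar ?q (hvec i 1 1) r = 0"
      using i by (auto simp: polar_hvec_other)
  qed
  have "tmul (tmul ?s (vprod (concat (map (t_pair lam) (i # L))))) ?si
      = tmul (tmul ?s (tmul ?U ?V)) (tmul tone (tmul ?W ?si))"
    by (simp add: t_pair_def vprod_append tmul_assoc)
  also have "cl_eq ?n ?q \<dots> (tmul (tmul ?s (tmul ?U ?V)) (tmul (tmul ?si ?s) (tmul ?W ?si)))"
    using cl_eq_sym [OF cl_eq_vprod_rev_vprod [OF s_factors_in_vecsp [where a=a and m=m], of "qform a m"]]
      qform_s_factors [OF m a] ok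
    by (intro cl_eq_tmul_right cl_eq_tmul_left tens_ok_tmul) auto
  also have "\<dots> = tmul (tmul (tmul ?s (tmul ?U ?V)) ?si) (tmul (tmul ?s ?W) ?si)"
    by (simp add: tmul_assoc)
  also have "cl_eq ?n ?q \<dots> (tmul (tmul ?V ?U) (tmul (tmul ?s ?W) ?si))"
    using cl_eq_conj_s_factors_hvec_pair [OF i a] ok by (intro cl_eq_tmul_left tens_ok_tmul)
  also have "cl_eq ?n ?q \<dots> (tmul (tmul ?V ?U) (vprod ?R))"
    using Cons ok by (intro cl_eq_tmul_right tens_ok_tmul) auto
  also have "cl_eq ?n ?q \<dots> (tmul (vprod ?R) (tmul ?V ?U))"
    using i by (intro cl_eq_sym [OF cl_eq_orth_pair_commute_vprod [OF vR _ _ orth]])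
      (simp_all add: hvec_in_vecsp)
  also have "\<dots> = vprod (rev (concat (map (t_pair lam) (i # L))))"
    by (simp add: t_pair_def vprod_append tmul_assoc)
  finally show ?case .
qed

lemma cl_eq_conj_s_factors_T_elem:
  fixes a :: "'a::field"
  assumes "1 \<le> m" "a \<noteq> 0"
  shows "cl_eq (2*m + 1) (qform a m)
     (tmul (tmul (vprod (s_factors a m)) (T_elem m lam)) (vprod (rev (s_factors a m)))) (trev (T_elem m lam))"
proof -
  let ?s = "vprod (s_factors a m)" and ?si = "vprod (rev (s_factors a m))"
  let ?X = "concat (map (t_pair lam) [1..<m+1])"
  have "tmul (tmul ?s (T_elem m lam)) ?si = tsmul (lam 0) (tmul (tmul ?s (vprod ?X)) ?si)"
    by (simp add: T_elem_eq_vprod)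
  also have "cl_eq (2*m + 1) (qform a m) \<dots> (tsmul (lam 0) (vprod (rev ?X)))"
    by (intro cl_eq_tsmul cl_eq_conj_s_factors_t_pairs [OF assms]) auto
  also have "\<dots> = trev (T_elem m lam)"
    by (simp add: T_elem_eq_vprod trev_vprod)
  finally show ?thesis .
qed

lemma s_factors_in_Gamma_plus:
  fixes a :: "'a::field"
  assumes "odd m" "a \<noteq> 0"
  shows "in_Gamma_plus (2*m + 1) (qform a m) (vprod (s_factors a m))"
proof -
  have "1 \<le> m"
    using \<open>odd m\<close> by (cases m) auto
  then show ?thesis
    using s_factors_in_vecsp [where a=a and m=m] qform_s_factors [of m a] assms
    by (simp add: in_Gamma_plus_def vprod_in_Gamma vprod_cl_even)
qed

lemma cl_inv_s_factors:
  fixes a :: "'a::field"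
  assumes "1 \<le> m" "a \<noteq> 0"
  shows "cl_inv (2*m + 1) (qform a m) (vprod (s_factors a m)) (vprod (rev (s_factors a m)))"
  using cl_inv_vprod [OF s_factors_in_vecsp [where a=a and m=m], of "qform a m"] qform_s_factors [OF assms]
  by simp

lemma cl_eq_Nrm_s_factors:
  fixes a :: "'a::field"
  assumes "1 \<le> m" "a \<noteq> 0"
  shows "cl_eq (2*m + 1) (qform a m) (Nrm (vprod (s_factors a m))) tone"
  using cl_eq_Nrm_vprod [OF s_factors_in_vecsp [where a=a and m=m], of "qform a m"] qform_s_factors [OF assms]
  by simp

lemma tens_ok_T_elem: "tens_ok (2*m + 1) (T_elem m lam)"
  unfolding T_elem_eq_vprod by (intro tens_ok_tsmul tens_ok_vprod t_pairs_in_vecsp) auto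

lemma cl_inv_T_elem:
  fixes lam :: "nat \<Rightarrow> 'a::field"
  assumes "\<forall>i\<le>m. lam i \<noteq> 0"
  shows "\<exists>ti. cl_inv (2*m + 1) (qform a m) (T_elem m lam) ti"
proof -
  let ?X = "concat (map (t_pair lam) [1..<m+1])"
  have "set ?X \<subseteq> vecsp (2*m + 1)"
    by (rule t_pairs_in_vecsp) auto
  then have "cl_inv (2*m + 1) (qform a m) (vprod ?X)
               (tsmul (inverse (prod_list (map (qform a m) ?X))) (vprod (rev ?X)))"
    using qform_t_pairs_nonzero [OF assms] by (rule cl_inv_vprod)
  then show ?thesis
    unfolding T_elem_eq_vprod using assms by (blast intro: cl_inv_tsmul)
qed

theorem corollary5p9:
  fixes a :: "'a::field" and m :: nat and lam :: "nat \<Rightarrow> 'a"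
  assumes "perfect_field TYPE('a)"
    and "CHAR('a) \<noteq> 2"
    and "odd m"
    and "a \<noteq> 0"
    and "\<forall>i\<le>m. lam i \<noteq> 0"
  shows "\<exists>s si ti.
           in_Gamma_plus (2*m+1) (qform a m) s
         \<and> cl_inv (2*m+1) (qform a m) s si
         \<and> cl_inv (2*m+1) (qform a m) (T_elem m lam) ti
         \<and> cl_eq (2*m+1) (qform a m) (tmul (tmul s (T_elem m lam)) si)
                                      (tmul (Nrm (T_elem m lam)) ti)
         \<and> cl_eq (2*m+1) (qform a m) (Nrm s) tone
         \<and> cl_eq (2*m+1) (qform a m) (tmul s s) (tsmul ((-1) ^ (m*(m+1) div 2)) tone)"
proof -
  have m: "1 \<le> m"
    using \<open>odd m\<close> by (cases m) auto
  obtain ti where ti: "cl_inv (2*m + 1) (qform a m) (T_elem m lam) ti"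
    using cl_inv_T_elem [OF assms(5)] by blast
  have "cl_eq (2*m + 1) (qform a m)
          (tmul (tmul (vprod (s_factors a m)) (T_elem m lam)) (vprod (rev (s_factors a m))))
          (tmul (Nrm (T_elem m lam)) ti)"
    using cl_eq_conj_s_factors_T_elem [OF m \<open>a \<noteq> 0\<close>] cl_eq_Nrm_mult_inv [OF ti tens_ok_T_elem]
    by (metis cl_eq_sym cl_eq_trans)
  then show ?thesis
    using s_factors_in_Gamma_plus [OF \<open>odd m\<close> \<open>a \<noteq> 0\<close>] cl_inv_s_factors [OF m \<open>a \<noteq> 0\<close>] ti
      cl_eq_Nrm_s_factors [OF m \<open>a \<noteq> 0\<close>] cl_eq_s_factors_square [OF m \<open>a \<noteq> 0\<close>]
    by blast
qed

end
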